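(* Let $i,j\geq 1$ be integers. For $n\geq 0$, let $U(i,j,n)$ be the set of all triples $(L_1,L_2,L_3)$ of walks of length $n$ with steps $(1,1)$ and $(1,-1)$, where $L_1$ starts at $(0,0)$, $L_2$ starts at $(0,2i)$ and $L_3$ starts at $(0,2i+2j)$. Let $V(i,j,n)$ be the set of triples in $U(i,j,n)$ whose three walks are pairwise nonintersecting, and for $\{a,b\}\in\{\{1,2\},\{2,3\},\{1,3\}\}$ let $M_{ab}(n)$ be the set of triples in $U(i,j,n)$ such that $L_a$ intersects $L_b$. Define $V_{i,j}(t)=\sum_{n\geq 0}|V(i,j,n)|t^n$, $U_{i,j}(t)=\sum_{n\geq 0}|U(i,j,n)|t^n$ and $M_{ab}(t)=\sum_{n\geq0}|M_{ab}(n)|t^n$. Then $$V_{i,j}(t)=U_{i,j}(t)+M_{13}(t)-M_{12}(t)-M_{23}(t).$$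
   Context: Two walks intersect if they share a common lattice point; otherwise they are nonintersecting. *)

theory Defs
  imports "HOL-Computational_Algebra.Formal_Power_Series"
begin

text \<open>A walk of length n with steps (1,1) and (1,-1) starting at (0,h) is encoded by its
  start height h and its list of vertical steps (each -1 or 1).\<close>

definition step_seqs :: "nat \<Rightarrow> int list set" where
  "step_seqs n = {s. length s = n \<and> set s \<subseteq> {-1, 1}}"

definition walk_points :: "int \<Rightarrow> int list \<Rightarrow> (int \<times> int) set" where
  "walk_points h s = {(int k, h + sum_list (take k s)) | k. k \<le> length s}"

definition walks_intersect :: "int \<Rightarrow> int list \<Rightarrow> int \<Rightarrow> int list \<Rightarrow> bool" where
  "walks_intersect h1 s1 h2 s2 \<longleftrightarrow> walk_points h1 s1 \<inter> walk_points h2 s2 \<noteq> {}"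

definition U_set :: "nat \<Rightarrow> nat \<Rightarrow> nat \<Rightarrow> (int list \<times> int list \<times> int list) set" where
  "U_set i j n = step_seqs n \<times> step_seqs n \<times> step_seqs n"

definition start1 :: "nat \<Rightarrow> nat \<Rightarrow> int" where "start1 i j = 0"
definition start2 :: "nat \<Rightarrow> nat \<Rightarrow> int" where "start2 i j = 2 * int i"
definition start3 :: "nat \<Rightarrow> nat \<Rightarrow> int" where "start3 i j = 2 * int i + 2 * int j"

definition V_set :: "nat \<Rightarrow> nat \<Rightarrow> nat \<Rightarrow> (int list \<times> int list \<times> int list) set" where
  "V_set i j n = {(s1, s2, s3) \<in> U_set i j n.
      \<not> walks_intersect (start1 i j) s1 (start2 i j) s2 \<and>
      \<not> walks_intersect (start2 i j) s2 (start3 i j) s3 \<and>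
      \<not> walks_intersect (start1 i j) s1 (start3 i j) s3}"

definition M12_set :: "nat \<Rightarrow> nat \<Rightarrow> nat \<Rightarrow> (int list \<times> int list \<times> int list) set" where
  "M12_set i j n = {(s1, s2, s3) \<in> U_set i j n. walks_intersect (start1 i j) s1 (start2 i j) s2}"

definition M23_set :: "nat \<Rightarrow> nat \<Rightarrow> nat \<Rightarrow> (int list \<times> int list \<times> int list) set" where
  "M23_set i j n = {(s1, s2, s3) \<in> U_set i j n. walks_intersect (start2 i j) s2 (start3 i j) s3}"

definition M13_set :: "nat \<Rightarrow> nat \<Rightarrow> nat \<Rightarrow> (int list \<times> int list \<times> int list) set" where
  "M13_set i j n = {(s1, s2, s3) \<in> U_set i j n. walks_intersect (start1 i j) s1 (start3 i j) s3}"

definition gf :: "(nat \<Rightarrow> 'a set) \<Rightarrow> int fps" where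
  "gf A = Abs_fps (\<lambda>n. int (card (A n)))"

end

theory Submission
  imports Defs
begin

text \<open>Since L2 starts between L1 and L3 and all three walks have heights of the same parity,
  L1 can only meet L3 after L2 has met one of them. Hence M13 is contained in M12 \<union> M23, and
  inclusion-exclusion reduces the identity to |M12 \<inter> M23| = |M13|. An involution proves
  this: at the first time L2 touches L1 (or, failing that, L3), exchange the tails of the two
  touching walks. The walks are unchanged up to that time, so the first contact time and the
  choice of pair are preserved and the map is an involution; after it, the swapped outer walk
  follows L2, so it meets the other outer walk exactly when L2 did.\<close>

definition height :: "int \<Rightarrow> int list \<Rightarrow> nat \<Rightarrow> int" where
  "height h s k = h + sum_list (take k s)"

lemma finite_step_seqs: "finite (step_seqs n)"
proof -
  have "step_seqs n = {s. set s \<subseteq> {-1, 1} \<and> length s = n}"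
    by (auto simp: step_seqs_def)
  then show ?thesis by (simp add: finite_lists_length_eq)
qed

lemma walks_intersect_iff_height:
  assumes "s \<in> step_seqs n" "t \<in> step_seqs n"
  shows "walks_intersect h s h' t \<longleftrightarrow> (\<exists>k\<le>n. height h s k = height h' t k)"
  using assms by (auto simp: walks_intersect_def walk_points_def height_def step_seqs_def)

lemma height_step:
  assumes "s \<in> step_seqs n" "k < n"
  shows "\<bar>height h s (Suc k) - height h s k\<bar> = 1"
proof -
  have k: "k < length s" using assms by (simp add: step_seqs_def)
  then have "s ! k \<in> {-1, 1}" using assms(1) nth_mem by (auto simp: step_seqs_def)
  moreover have "height h s (Suc k) = height h s k + s ! k"
    using k by (simp add: height_def take_Suc_conv_app_nth)
  ultimately show ?thesis by auto
qed

lemma even_sum_list_plus_length: "set xs \<subseteq> {-1, 1} \<Longrightarrow> even (sum_list xs + int (length xs))"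
  by (induction xs) auto

lemma height_parity:
  assumes "s \<in> step_seqs n" "k \<le> n"
  shows "even (height h s k - h + int k)"
proof -
  have "set (take k s) \<subseteq> {-1, 1}" "length (take k s) = k"
    using assms set_take_subset[of k s] by (auto simp: step_seqs_def)
  then show ?thesis using even_sum_list_plus_length[of "take k s"] by (simp add: height_def)
qed

lemma even_steps_zero_crossing:
  fixes D :: "nat \<Rightarrow> int"
  assumes "\<forall>k<t. \<bar>D (Suc k) - D k\<bar> \<le> 2" "\<forall>k\<le>t. even (D k)" "0 \<le> D 0" "D t \<le> 0"
  shows "\<exists>e\<le>t. D e = 0"
  using assms
proof (induction t)
  case 0
  then show ?case by auto
next
  case (Suc t)
  show ?case
  proof (cases "D t \<le> 0")
    case True
    with Suc have "\<exists>e\<le>t. D e = 0" by simp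
    then show ?thesis by (auto intro: le_SucI)
  next
    case False
    have "even (D t)" using Suc.prems(2) by simp
    with False have "D t \<ge> 2" by presburger
    moreover have "\<bar>D (Suc t) - D t\<bar> \<le> 2" using Suc.prems(1) by simp
    ultimately have "D (Suc t) = 0" using Suc.prems(4) by arith
    then show ?thesis by blast
  qed
qed

lemma walks_meet_if_cross:
  assumes "s \<in> step_seqs n" "t \<in> step_seqs n" "k \<le> n"
    and "h \<le> h'" "even (h' - h)" "height h' t k \<le> height h s k"
  shows "\<exists>e\<le>k. height h s e = height h' t e"
proof -
  have "\<exists>e\<le>k. height h' t e - height h s e = 0"
  proof (rule even_steps_zero_crossing)
    show "\<forall>e<k. \<bar>(height h' t (Suc e) - height h s (Suc e)) - (height h' t e - height h s e)\<bar> \<le> 2"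
    proof (intro allI impI)
      fix e assume "e < k"
      then have "\<bar>height h s (Suc e) - height h s e\<bar> = 1" "\<bar>height h' t (Suc e) - height h' t e\<bar> = 1"
        using height_step assms(1-3) by simp_all
      then show "\<bar>(height h' t (Suc e) - height h s (Suc e)) - (height h' t e - height h s e)\<bar> \<le> 2"
        by arith
    qed
    show "\<forall>e\<le>k. even (height h' t e - height h s e)"
    proof (intro allI impI)
      fix e assume "e \<le> k"
      then have "even (height h s e - h + int e)" "even (height h' t e - h' + int e)"
        using height_parity assms(1-3) by simp_all
      then show "even (height h' t e - height h s e)" using assms(5) by presburger
    qed
  qed (use assms in \<open>auto simp: height_def\<close>)
  then show ?thesis by auto
qed

lemma height_swap_tails:
  assumes "d \<le> length s" "d \<le> length t" "height h s d = height h' t d"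
  shows "height h (take d s @ drop d t) k = (if k \<le> d then height h s k else height h' t k)"
proof (cases "k \<le> d")
  case True
  then show ?thesis using assms by (simp add: height_def min_def)
next
  case False
  then have "take k (take d s @ drop d t) = take d s @ take (k - d) (drop d t)"
    using assms(1) by simp
  moreover have "take k t = take d t @ take (k - d) (drop d t)"
    using False take_add[of d "k - d" t] by simp
  ultimately show ?thesis using False assms by (simp add: height_def)
qed

lemma swap_tails_in_step_seqs:
  "s \<in> step_seqs n \<Longrightarrow> t \<in> step_seqs n \<Longrightarrow> d \<le> n \<Longrightarrow> take d s @ drop d t \<in> step_seqs n"
  using set_take_subset[of d s] set_drop_subset[of d t] by (auto simp: step_seqs_def)

text \<open>P and R are the heights of the outer walks, Q that of the middle one, and d is the first
  time Q touches P or R.\<close>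

lemma meeting_after_tail_swap:
  fixes P Q R :: "nat \<Rightarrow> int"
  assumes "Q d = P d" and first: "\<forall>k<d. Q k \<noteq> P k \<and> Q k \<noteq> R k"
    and between: "\<forall>k\<le>n. P k = R k \<longrightarrow> (\<exists>e\<le>k. Q e = P e \<or> Q e = R e)"
  shows "(\<exists>k\<le>n. Q k = R k) \<longleftrightarrow> (\<exists>k\<le>n. (if k \<le> d then P k else Q k) = R k)"
proof -
  have swapped: "(if k \<le> d then P k else Q k) = R k \<longleftrightarrow> d \<le> k \<and> Q k = R k" if "k \<le> n" for k
  proof (cases "k < d")
    case True
    have "P k \<noteq> R k"
    proof
      assume "P k = R k"
      then obtain e where "e \<le> k" "Q e = P e \<or> Q e = R e" using between \<open>k \<le> n\<close> by blast
      then show False using first True by (meson le_less_trans)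
    qed
    then show ?thesis using True by simp
  next
    case False
    then show ?thesis using assms(1) by (cases "k = d") simp_all
  qed
  have "Q k = R k \<longleftrightarrow> d \<le> k \<and> Q k = R k" for k
    using first by (meson not_le)
  with swapped show ?thesis by blast
qed

lemma card_Diff_Un:
  assumes "finite U" "A \<subseteq> U" "B \<subseteq> U"
  shows "int (card (U - (A \<union> B))) = int (card U) - int (card A) - int (card B) + int (card (A \<inter> B))"
proof -
  have fin: "finite A" "finite B" using assms finite_subset by auto
  have AB: "finite (A \<union> B)" "A \<union> B \<subseteq> U" using fin assms by auto
  have "card (U - (A \<union> B)) = card U - card (A \<union> B)"
    using AB by (rule card_Diff_subset)
  moreover have "card (A \<union> B) \<le> card U"
    using assms(1) AB(2) by (rule card_mono)
  moreover have "card A + card B = card (A \<union> B) + card (A \<inter> B)"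
    using fin by (rule card_Un_Int)
  ultimately show ?thesis by (simp add: of_nat_diff)
qed

lemma involution_bij_betw:
  assumes "\<forall>x\<in>U. f x \<in> U \<and> f (f x) = x" "A \<subseteq> U" "C \<subseteq> U" "\<forall>x\<in>U. x \<in> A \<longleftrightarrow> f x \<in> C"
  shows "bij_betw f A C"
  by (rule bij_betw_byWitness[where f' = f]) (use assms in \<open>auto 4 3\<close>)

locale nested_starts =
  fixes a b c :: int
  assumes a_le_b: "a \<le> b" and b_le_c: "b \<le> c"
    and even_b_minus_a: "even (b - a)" and even_c_minus_b: "even (c - b)"
begin

lemma outer_meeting_passes_middle:
  assumes "s1 \<in> step_seqs n" "s2 \<in> step_seqs n" "s3 \<in> step_seqs n" "k \<le> n"
    and "height a s1 k = height c s3 k"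
  shows "\<exists>e\<le>k. height b s2 e = height a s1 e \<or> height b s2 e = height c s3 e"
proof (cases "height b s2 k \<le> height a s1 k")
  case True
  from walks_meet_if_cross[OF assms(1,2,4) a_le_b even_b_minus_a True]
  obtain e where "e \<le> k" "height a s1 e = height b s2 e" by blast
  then show ?thesis by (intro exI[of _ e]) simp
next
  case False
  then have "height c s3 k \<le> height b s2 k" using assms(5) by linarith
  from walks_meet_if_cross[OF assms(2,3,4) b_le_c even_c_minus_b this]
  obtain e where "e \<le> k" "height b s2 e = height c s3 e" by blast
  then show ?thesis by (intro exI[of _ e]) simp
qed

lemma outer_intersection_passes_middle:
  assumes "s1 \<in> step_seqs n" "s2 \<in> step_seqs n" "s3 \<in> step_seqs n"
    and "walks_intersect a s1 c s3"
  shows "walks_intersect a s1 b s2 \<or> walks_intersect b s2 c s3"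
  using assms outer_meeting_passes_middle[OF assms(1-3)]
  by (simp add: walks_intersect_iff_height) (metis order_trans)

definition contact :: "int list \<Rightarrow> int list \<Rightarrow> int list \<Rightarrow> nat \<Rightarrow> bool" where
  "contact s1 s2 s3 k \<longleftrightarrow> height b s2 k = height a s1 k \<or> height b s2 k = height c s3 k"

lemma ex_contact_iff:
  assumes "s1 \<in> step_seqs n" "s2 \<in> step_seqs n" "s3 \<in> step_seqs n"
  shows "(\<exists>k\<le>n. contact s1 s2 s3 k) \<longleftrightarrow> walks_intersect a s1 b s2 \<or> walks_intersect b s2 c s3"
  unfolding contact_def walks_intersect_iff_height[OF assms(1,2)] walks_intersect_iff_height[OF assms(2,3)]
  by (auto simp: eq_commute[of "height b s2 _" "height a s1 _"])

definition switch :: "nat \<Rightarrow> int list \<times> int list \<times> int list \<Rightarrow> int list \<times> int list \<times> int list" where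
  "switch n = (\<lambda>(s1, s2, s3).
     if \<exists>k\<le>n. contact s1 s2 s3 k then
       let d = LEAST k. contact s1 s2 s3 k in
       if height a s1 d = height b s2 d
       then (take d s1 @ drop d s2, take d s2 @ drop d s1, s3)
       else (s1, take d s2 @ drop d s3, take d s3 @ drop d s2)
     else (s1, s2, s3))"

lemma switch_at_first_contact:
  assumes "d \<le> n" "contact s1 s2 s3 d" "\<forall>k<d. \<not> contact s1 s2 s3 k"
  shows "switch n (s1, s2, s3) =
    (if height a s1 d = height b s2 d
     then (take d s1 @ drop d s2, take d s2 @ drop d s1, s3)
     else (s1, take d s2 @ drop d s3, take d s3 @ drop d s2))"
proof -
  have "(LEAST k. contact s1 s2 s3 k) = d"
    using assms(2,3) by (intro Least_equality) (auto simp: not_less[symmetric])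
  then show ?thesis using assms(1,2) by (auto simp: switch_def Let_def)
qed

lemma switch_without_contact:
  "\<not> (\<exists>k\<le>n. contact s1 s2 s3 k) \<Longrightarrow> switch n (s1, s2, s3) = (s1, s2, s3)"
  unfolding switch_def by (simp only: prod.case if_False)

lemma switch_at_contact12:
  assumes U: "s1 \<in> step_seqs n" "s2 \<in> step_seqs n" "s3 \<in> step_seqs n"
    and d: "d \<le> n" "contact s1 s2 s3 d" "\<forall>k<d. \<not> contact s1 s2 s3 k"
    and meet12: "height a s1 d = height b s2 d"
    and t: "t1 = take d s1 @ drop d s2" "t2 = take d s2 @ drop d s1"
  shows "switch n (s1, s2, s3) = (t1, t2, s3) \<and> switch n (t1, t2, s3) = (s1, s2, s3)
    \<and> t1 \<in> step_seqs n \<and> t2 \<in> step_seqs n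
    \<and> (walks_intersect b s2 c s3 \<longleftrightarrow> walks_intersect a t1 c s3)"
proof -
  have len: "length s1 = n" "length s2 = n" using U by (auto simp: step_seqs_def)
  have t_in: "t1 \<in> step_seqs n" "t2 \<in> step_seqs n"
    using t swap_tails_in_step_seqs U d(1) by simp_all
  have h1: "height a t1 k = (if k \<le> d then height a s1 k else height b s2 k)" for k
    using height_swap_tails[of d s1 s2 a b] t len d(1) meet12 by simp
  have h2: "height b t2 k = (if k \<le> d then height b s2 k else height a s1 k)" for k
    using height_swap_tails[of d s2 s1 b a] t len d(1) meet12 by simp
  have "switch n (t1, t2, s3) = (take d t1 @ drop d t2, take d t2 @ drop d t1, s3)"
    using switch_at_first_contact[of d n t1 t2 s3] d h1 h2 meet12 by (simp add: contact_def)
  moreover have "(\<exists>k\<le>n. height b s2 k = height c s3 k) \<longleftrightarrow> (\<exists>k\<le>n. height a t1 k = height c s3 k)"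
    unfolding h1
    by (rule meeting_after_tail_swap[where P = "height a s1" and Q = "height b s2"])
      (use meet12 d(3) outer_meeting_passes_middle[OF U] in \<open>auto simp: contact_def\<close>)
  ultimately show ?thesis
    using switch_at_first_contact[OF d] meet12 t t_in len d(1) U
    by (simp add: walks_intersect_iff_height)
qed

lemma switch_at_contact23:
  assumes U: "s1 \<in> step_seqs n" "s2 \<in> step_seqs n" "s3 \<in> step_seqs n"
    and d: "d \<le> n" "contact s1 s2 s3 d" "\<forall>k<d. \<not> contact s1 s2 s3 k"
    and no_meet12: "height a s1 d \<noteq> height b s2 d"
    and t: "t2 = take d s2 @ drop d s3" "t3 = take d s3 @ drop d s2"
  shows "switch n (s1, s2, s3) = (s1, t2, t3) \<and> switch n (s1, t2, t3) = (s1, s2, s3)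
    \<and> t2 \<in> step_seqs n \<and> t3 \<in> step_seqs n
    \<and> (walks_intersect a s1 b s2 \<longleftrightarrow> walks_intersect a s1 c t3)"
proof -
  have meet23: "height b s2 d = height c s3 d" using d(2) no_meet12 by (simp add: contact_def)
  have len: "length s2 = n" "length s3 = n" using U by (auto simp: step_seqs_def)
  have t_in: "t2 \<in> step_seqs n" "t3 \<in> step_seqs n"
    using t swap_tails_in_step_seqs U d(1) by simp_all
  have h2: "height b t2 k = (if k \<le> d then height b s2 k else height c s3 k)" for k
    using height_swap_tails[of d s2 s3 b c] t len d(1) meet23 by simp
  have h3: "height c t3 k = (if k \<le> d then height c s3 k else height b s2 k)" for k
    using height_swap_tails[of d s3 s2 c b] t len d(1) meet23 by simp
  have "switch n (s1, t2, t3) = (s1, take d t2 @ drop d t3, take d t3 @ drop d t2)"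
    using switch_at_first_contact[of d n s1 t2 t3] d h2 h3 no_meet12 by (simp add: contact_def)
  moreover have "(\<exists>k\<le>n. height b s2 k = height a s1 k) \<longleftrightarrow> (\<exists>k\<le>n. height c t3 k = height a s1 k)"
    unfolding h3
    by (rule meeting_after_tail_swap[where P = "height c s3" and Q = "height b s2"])
      (use meet23 d(3) outer_meeting_passes_middle[OF U _ sym] in \<open>auto simp: contact_def\<close>)
  ultimately show ?thesis
    using switch_at_first_contact[OF d] no_meet12 t t_in len d(1) U
    by (simp add: walks_intersect_iff_height eq_commute[of "height a s1 _"])
qed

lemma switch_involution:
  assumes U: "s1 \<in> step_seqs n" "s2 \<in> step_seqs n" "s3 \<in> step_seqs n"
    and T': "switch n (s1, s2, s3) = (t1, t2, t3)"
  shows "t1 \<in> step_seqs n \<and> t2 \<in> step_seqs n \<and> t3 \<in> step_seqs n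
    \<and> switch n (t1, t2, t3) = (s1, s2, s3)
    \<and> (walks_intersect a s1 b s2 \<and> walks_intersect b s2 c s3 \<longleftrightarrow> walks_intersect a t1 c t3)"
proof (cases "\<exists>k\<le>n. contact s1 s2 s3 k")
  case False
  then have "\<not> walks_intersect a s1 b s2" "\<not> walks_intersect b s2 c s3"
    using ex_contact_iff[OF U] by blast+
  moreover from this have "\<not> walks_intersect a s1 c s3"
    using outer_intersection_passes_middle[OF U] by blast
  moreover have "t1 = s1" "t2 = s2" "t3 = s3"
    using T' switch_without_contact[OF False] by simp_all
  ultimately show ?thesis using False U by (simp add: switch_without_contact)
next
  case True
  then obtain k where k: "k \<le> n" "contact s1 s2 s3 k" by blast
  define d where "d = (LEAST k. contact s1 s2 s3 k)"
  have d: "d \<le> n" "contact s1 s2 s3 d" "\<forall>k<d. \<not> contact s1 s2 s3 k"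
    using k Least_le[of "contact s1 s2 s3" k] LeastI[of "contact s1 s2 s3" k] not_less_Least
    by (auto simp: d_def)
  show ?thesis
  proof (cases "height a s1 d = height b s2 d")
    case True
    then have "walks_intersect a s1 b s2"
      using d(1) U by (auto simp: walks_intersect_iff_height)
    with switch_at_contact12[OF U d True refl refl] T' U show ?thesis by auto
  next
    case False
    then have "walks_intersect b s2 c s3"
      using d U by (auto simp: walks_intersect_iff_height contact_def)
    with switch_at_contact23[OF U d False refl refl] T' U show ?thesis by auto
  qed
qed

lemma switch_bij_betw:
  fixes n :: nat
  defines "W \<equiv> step_seqs n \<times> step_seqs n \<times> step_seqs n"
  shows "bij_betw (switch n)
    {(s1, s2, s3) \<in> W. walks_intersect a s1 b s2 \<and> walks_intersect b s2 c s3}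
    {(s1, s2, s3) \<in> W. walks_intersect a s1 c s3}"
proof -
  define A where "A = {(s1, s2, s3) \<in> W. walks_intersect a s1 b s2 \<and> walks_intersect b s2 c s3}"
  define C where "C = {(s1, s2, s3) \<in> W. walks_intersect a s1 c s3}"
  have key: "switch n T \<in> W \<and> switch n (switch n T) = T \<and> (T \<in> A \<longleftrightarrow> switch n T \<in> C)"
    if "T \<in> W" for T
  proof -
    obtain s1 s2 s3 where T: "T = (s1, s2, s3)" by (cases T)
    obtain t1 t2 t3 where T': "switch n (s1, s2, s3) = (t1, t2, t3)" by (cases "switch n (s1, s2, s3)")
    from that T have U: "s1 \<in> step_seqs n" "s2 \<in> step_seqs n" "s3 \<in> step_seqs n"
      by (auto simp: W_def)
    from switch_involution[OF U T'] show ?thesis by (simp add: T T' W_def A_def C_def U)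
  qed
  have "bij_betw (switch n) A C"
    by (rule involution_bij_betw[where U = W]) (use key in \<open>auto simp: A_def C_def\<close>)
  then show ?thesis by (simp add: A_def C_def)
qed

end

theorem proposition3p1:
  fixes i j :: nat
  assumes "i \<ge> 1" and "j \<ge> 1"
  shows "gf (V_set i j) = gf (U_set i j) + gf (M13_set i j) - gf (M12_set i j) - gf (M23_set i j)"
proof -
  interpret nested_starts "start1 i j" "start2 i j" "start3 i j"
    by unfold_locales (auto simp: start1_def start2_def start3_def)
  have "int (card (V_set i j n)) = int (card (U_set i j n)) + int (card (M13_set i j n))
      - int (card (M12_set i j n)) - int (card (M23_set i j n))" for n
  proof -
    have "V_set i j n = U_set i j n - (M12_set i j n \<union> M23_set i j n)"
      using outer_intersection_passes_middle
      by (auto simp: V_set_def M12_set_def M23_set_def U_set_def)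
    moreover have "card (M12_set i j n \<inter> M23_set i j n) = card (M13_set i j n)"
    proof -
      have "M12_set i j n \<inter> M23_set i j n = {(s1, s2, s3) \<in> U_set i j n.
          walks_intersect (start1 i j) s1 (start2 i j) s2 \<and> walks_intersect (start2 i j) s2 (start3 i j) s3}"
        by (auto simp: M12_set_def M23_set_def)
      then show ?thesis
        using bij_betw_same_card[OF switch_bij_betw[of n]] by (simp add: M13_set_def U_set_def)
    qed
    moreover have "M12_set i j n \<subseteq> U_set i j n" "M23_set i j n \<subseteq> U_set i j n"
      by (auto simp: M12_set_def M23_set_def)
    ultimately show ?thesis
      using card_Diff_Un[of "U_set i j n"] finite_step_seqs by (simp add: U_set_def)
  qed
  then show ?thesis by (intro fps_ext) (simp add: gf_def)
qed

end
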